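(* Let $V$ be a real Hilbert space, $\mathcal D$ a dictionary, $V_n\subset V$ any subspace of dimension $n$ with orthonormal basis $(\phi_1,\dots,\phi_n)$, and $\kappa\in(0,1)$. If $(W_m)_{m\ge0}$ is generated by the collective OMP algorithm with parameter $\kappa$, then $\lim_{m\to\infty}r_m=0$.
   Context: A dictionary is a set $\mathcal D\subset V$ of elements with $\|\omega\|=1$ for all $\omega\in\mathcal D$ whose finite linear combinations are dense in $V$. Collective OMP: $W_0=\{0\}$; for $k\ge1$, choose $\omega_k\in\mathcal D$ with $$\sum_{i=1}^n|\langle\phi_i-P_{W_{k-1}}\phi_i,\omega_k\rangle|^2\ge\kappa^2\sup_{\omega\in\mathcal D}\sum_{i=1}^n|\langle\phi_i-P_{W_{k-1}}\phi_i,\omega\rangle|^2,$$ and set $W_k=\operatorname{span}\{\omega_1,\dots,\omega_k\}$ ($P_X$ is the orthogonal projection onto $X$). The residual is $r_m=\sum_{i=1}^n\|\phi_i-P_{W_m}\phi_i\|^2$. *)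

theory Defs
  imports "HOL-Analysis.Analysis"
begin

text \<open>Orthogonal projection onto a subspace W: the unique y in W with x - y orthogonal to W.
  (Used here only for finite-dimensional, hence closed, subspaces of a Hilbert space,
  where it exists and is unique.)\<close>
definition orth_proj :: "'a::real_inner set \<Rightarrow> 'a \<Rightarrow> 'a" where
  "orth_proj W x = (THE y. y \<in> W \<and> (\<forall>w\<in>W. inner (x - y) w = 0))"

definition dictionary :: "'a::real_normed_vector set \<Rightarrow> bool" where
  "dictionary D \<longleftrightarrow> (\<forall>w\<in>D. norm w = 1) \<and> closure (span D) = UNIV"

end

theory Submission
  imports Defs
begin

text \<open>For each \<open>i\<close> the residuals \<open>r m i = \<phi> i - P(W m) (\<phi> i)\<close> satisfy
  \<open>\<parallel>r m i\<parallel>\<^sup>2 = \<parallel>r k i\<parallel>\<^sup>2 + \<parallel>r m i - r k i\<parallel>\<^sup>2\<close> for \<open>m \<le> k\<close>, so they form a Cauchy sequence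
  and converge to some \<open>\<rho> i\<close> orthogonal to every selected \<open>\<omega> k\<close>. Hence the selected quantity
  \<open>\<Sum>\<^sub>i \<langle>r m i, \<omega> (m+1)\<rangle>\<^sup>2 = \<Sum>\<^sub>i \<langle>r m i - \<rho> i, \<omega> (m+1)\<rangle>\<^sup>2\<close> tends to \<open>0\<close>, and by the weak greedy
  inequality so does \<open>\<Sum>\<^sub>i \<langle>r m i, w\<rangle>\<^sup>2\<close> for every \<open>w\<close> in the dictionary. Thus each \<open>\<rho> i\<close> is
  orthogonal to the dictionary, hence zero by density.\<close>

lemma orth_proj_unique:
  assumes "subspace W" "y \<in> W" "\<forall>w\<in>W. inner (x - y) w = 0"
  shows "orth_proj W x = y"
  unfolding orth_proj_def
proof (rule the_equality)
  fix z assume z: "z \<in> W \<and> (\<forall>w\<in>W. inner (x - z) w = 0)"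
  have "y - z \<in> W" using assms z by (simp add: subspace_diff)
  then have "inner (x - z) (y - z) - inner (x - y) (y - z) = 0" using assms z by simp
  then have "inner (y - z) (y - z) = 0" by (simp add: inner_diff_left algebra_simps)
  then show "z = y" by simp
qed (use assms in blast)

lemma ex_orth_proj_finite_span:
  fixes S :: "'a::real_inner set"
  assumes "finite S"
  shows "\<exists>y\<in>span S. \<forall>w\<in>span S. inner (x - y) w = 0"
  using assms
proof (induction S arbitrary: x)
  case empty
  then show ?case by auto
next
  case (insert a S)
  obtain p where p: "p \<in> span S" "\<forall>w\<in>span S. inner (x - p) w = 0"
    using insert.IH by blast
  obtain q where q: "q \<in> span S" "\<forall>w\<in>span S. inner (a - q) w = 0"
    using insert.IH by blast
  define a' where "a' = a - q"
  show ?case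
  proof (cases "a' = 0")
    case True
    then have "span (insert a S) = span S"
      using q(1) a'_def by (simp add: span_redundant)
    then show ?thesis using p by auto
  next
    case False
    \<comment> \<open>Gram--Schmidt step: correct \<open>p\<close> along the component \<open>a'\<close> of \<open>a\<close> orthogonal to \<open>span S\<close>.\<close>
    define p' where "p' = p + (inner (x - p) a' / inner a' a') *\<^sub>R a'"
    have a'_span: "a' \<in> span (insert a S)"
      unfolding a'_def using q(1) by (meson span_base span_diff span_mono insertI1 subset_insertI subsetD)
    have "p' \<in> span (insert a S)"
      unfolding p'_def using p(1) a'_span by (meson span_add span_mul span_mono subset_insertI subsetD)
    moreover have "inner (x - p') w = 0" if w: "w \<in> span (insert a S)" for w
    proof -
      obtain k where "w - k *\<^sub>R a \<in> span S" using w span_insert by blast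
      moreover have "w - k *\<^sub>R a' = (w - k *\<^sub>R a) + k *\<^sub>R q"
        unfolding a'_def by (simp add: algebra_simps)
      ultimately have w0: "w - k *\<^sub>R a' \<in> span S"
        using q(1) by (metis span_add span_mul)
      have "inner (x - p') (w - k *\<^sub>R a') = 0"
        using p(2) q(2) w0 unfolding p'_def a'_def by (simp add: inner_diff_left inner_add_left)
      moreover have "inner (x - p') a' = 0"
        using False unfolding p'_def by (simp add: inner_diff_left inner_add_left field_simps)
      ultimately show ?thesis by (simp add: inner_diff_right)
    qed
    ultimately show ?thesis by blast
  qed
qed

lemma orth_proj_finite_span:
  fixes S :: "'a::real_inner set"
  assumes "finite S"
  shows "orth_proj (span S) x \<in> span S"
    and "w \<in> span S \<Longrightarrow> inner (x - orth_proj (span S) x) w = 0"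
proof -
  obtain y where "y \<in> span S" "\<forall>w\<in>span S. inner (x - y) w = 0"
    using ex_orth_proj_finite_span[OF assms] by blast
  moreover from this have "orth_proj (span S) x = y"
    by (simp add: orth_proj_unique)
  ultimately show "orth_proj (span S) x \<in> span S"
    and "w \<in> span S \<Longrightarrow> inner (x - orth_proj (span S) x) w = 0" by simp_all
qed

lemma norm_residual_orth_proj_Pythagorean:
  fixes S T :: "'a::real_inner set" and x :: 'a
  assumes "finite S" "finite T" "S \<subseteq> T"
  defines "r U \<equiv> x - orth_proj (span U) x"
  shows "(norm (r S))\<^sup>2 = (norm (r T))\<^sup>2 + (norm (r S - r T))\<^sup>2"
proof -
  have "r S - r T \<in> span T"
    using orth_proj_finite_span(1)[OF assms(1)] orth_proj_finite_span(1)[OF assms(2)]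
      span_mono[OF assms(3)] unfolding r_def by (auto intro: span_diff)
  then have "orthogonal (r T) (r S - r T)"
    using orth_proj_finite_span(2)[OF assms(2)] unfolding r_def orthogonal_def by blast
  from norm_add_Pythagorean[OF this] show ?thesis by simp
qed

lemma Cauchy_if_norm_Pythagorean:
  fixes r :: "nat \<Rightarrow> 'a::real_inner"
  assumes pyth: "\<And>m k. m \<le> k \<Longrightarrow> (norm (r m))\<^sup>2 = (norm (r k))\<^sup>2 + (norm (r m - r k))\<^sup>2"
  shows "Cauchy r"
proof (rule CauchyI)
  define a where "a m = (norm (r m))\<^sup>2" for m
  have "decseq a"
    unfolding decseq_def a_def using pyth by (metis le_add_same_cancel1 zero_le_power2)
  then obtain L where L: "a \<longlonglongrightarrow> L" and L_le: "\<And>m. L \<le> a m"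
    using decseq_convergent[of a 0] unfolding a_def by (metis zero_le_power2)
  fix e :: real assume "0 < e"
  then obtain M where M: "\<And>m. m \<ge> M \<Longrightarrow> a m - L < e\<^sup>2"
    using L L_le unfolding LIMSEQ_def dist_real_def by (metis abs_of_nonneg diff_ge_0_iff_ge zero_less_power)
  have close: "norm (r m - r k) < e" if "M \<le> m" "m \<le> k" for m k
  proof -
    have "(norm (r m - r k))\<^sup>2 = a m - a k" using pyth[OF that(2)] unfolding a_def by simp
    also have "\<dots> < e\<^sup>2" using M[OF that(1)] L_le[of k] by simp
    finally show ?thesis using \<open>0 < e\<close> by (simp add: power_less_imp_less_base)
  qed
  show "\<exists>M. \<forall>m\<ge>M. \<forall>k\<ge>M. norm (r m - r k) < e"
    using close by (metis linorder_le_cases norm_minus_commute)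
qed

lemma orth_proj_chain_residual_converges:
  fixes x :: "'a::{real_inner, complete_space}" and S :: "nat \<Rightarrow> 'a set"
  assumes fin: "\<And>k. finite (S k)" and "mono S"
  defines "r k \<equiv> x - orth_proj (span (S k)) x"
  obtains \<rho> where "r \<longlonglongrightarrow> \<rho>" and "\<And>k s. s \<in> span (S k) \<Longrightarrow> inner \<rho> s = 0"
proof -
  have "(norm (r m))\<^sup>2 = (norm (r k))\<^sup>2 + (norm (r m - r k))\<^sup>2" if "m \<le> k" for m k
    unfolding r_def by (rule norm_residual_orth_proj_Pythagorean[OF fin fin monoD[OF \<open>mono S\<close> that]])
  then have "Cauchy r" by (rule Cauchy_if_norm_Pythagorean)
  then obtain \<rho> where lim: "r \<longlonglongrightarrow> \<rho>" by (auto simp: Cauchy_convergent_iff convergent_def)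
  have "inner \<rho> s = 0" if s: "s \<in> span (S k)" for k s
  proof -
    have "(\<lambda>m. inner (r (m + k)) s) \<longlonglongrightarrow> inner \<rho> s"
      using LIMSEQ_ignore_initial_segment[OF lim] by (intro tendsto_intros)
    moreover have "inner (r (m + k)) s = 0" for m
      using orth_proj_finite_span(2)[OF fin] span_mono[OF monoD[OF \<open>mono S\<close>]] s unfolding r_def
      by (meson le_add2 subsetD)
    ultimately show ?thesis by (simp add: LIMSEQ_const_iff)
  qed
  with lim show ?thesis using that by blast
qed

lemma inner_square_le_norm_square:
  fixes x v :: "'a::real_inner"
  assumes "norm v \<le> 1"
  shows "(inner x v)\<^sup>2 \<le> (norm x)\<^sup>2"
proof -
  have "\<bar>inner x v\<bar> \<le> norm x"
    using Cauchy_Schwarz_ineq2[of x v] assms mult_left_le[of "norm v" "norm x"] by simp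
  then show ?thesis by (metis abs_ge_zero power2_abs power_mono)
qed

lemma sum_inner_square_tendsto_0:
  fixes r :: "nat \<Rightarrow> 'i \<Rightarrow> 'a::real_inner"
  assumes lim: "\<And>i. i \<in> I \<Longrightarrow> (\<lambda>m. r m i) \<longlonglongrightarrow> \<rho> i"
    and orth: "\<And>i m. i \<in> I \<Longrightarrow> inner (\<rho> i) (v m) = 0"
    and norm_v: "\<And>m. norm (v m) \<le> 1"
  shows "(\<lambda>m. \<Sum>i\<in>I. (inner (r m i) (v m))\<^sup>2) \<longlonglongrightarrow> 0"
proof (rule tendsto_sandwich[where f = "\<lambda>m. 0" and h = "\<lambda>m. \<Sum>i\<in>I. (norm (r m i - \<rho> i))\<^sup>2"])
  have "inner (r m i) (v m) = inner (r m i - \<rho> i) (v m)" if "i \<in> I" for m i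
    using orth[OF that] by (simp add: inner_diff_left)
  then show "\<forall>\<^sub>F m in sequentially. (\<Sum>i\<in>I. (inner (r m i) (v m))\<^sup>2) \<le> (\<Sum>i\<in>I. (norm (r m i - \<rho> i))\<^sup>2)"
    using inner_square_le_norm_square[OF norm_v] by (auto intro!: always_eventually sum_mono)
  have "(\<lambda>m. (norm (r m i - \<rho> i))\<^sup>2) \<longlonglongrightarrow> 0" if "i \<in> I" for i
    using tendsto_diff[OF lim[OF that] tendsto_const[of "\<rho> i"]] tendsto_norm_zero tendsto_power
    by fastforce
  then show "(\<lambda>m. \<Sum>i\<in>I. (norm (r m i - \<rho> i))\<^sup>2) \<longlonglongrightarrow> 0"
    using tendsto_sum[of I "\<lambda>i m. (norm (r m i - \<rho> i))\<^sup>2" "\<lambda>i. 0"] by simp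
qed (auto intro!: always_eventually sum_nonneg)

lemma weak_greedy_limit_orthogonal:
  fixes r :: "nat \<Rightarrow> 'i \<Rightarrow> 'a::real_inner"
  assumes "0 < \<kappa>" and "finite I"
    and norm_D: "\<And>w. w \<in> D \<Longrightarrow> norm w \<le> 1"
    and greedy: "\<And>m. (\<Sum>i\<in>I. (inner (r m i) (v m))\<^sup>2) \<ge> \<kappa>\<^sup>2 * (SUP w\<in>D. \<Sum>i\<in>I. (inner (r m i) w)\<^sup>2)"
    and selected: "(\<lambda>m. \<Sum>i\<in>I. (inner (r m i) (v m))\<^sup>2) \<longlonglongrightarrow> 0"
    and lim: "\<And>i. i \<in> I \<Longrightarrow> (\<lambda>m. r m i) \<longlonglongrightarrow> \<rho> i"
    and "w \<in> D" "i \<in> I"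
  shows "inner (\<rho> i) w = 0"
proof -
  let ?s = "\<lambda>m. \<Sum>i\<in>I. (inner (r m i) (v m))\<^sup>2"
  have bound: "(\<Sum>i\<in>I. (inner (r m i) w)\<^sup>2) \<le> ?s m / \<kappa>\<^sup>2" for m
  proof -
    have "bdd_above ((\<lambda>w. \<Sum>i\<in>I. (inner (r m i) w)\<^sup>2) ` D)"
      by (rule bdd_aboveI2[of _ _ "\<Sum>i\<in>I. (norm (r m i))\<^sup>2"])
        (auto intro!: sum_mono inner_square_le_norm_square norm_D)
    then have "(\<Sum>i\<in>I. (inner (r m i) w)\<^sup>2) \<le> (SUP w\<in>D. \<Sum>i\<in>I. (inner (r m i) w)\<^sup>2)"
      using \<open>w \<in> D\<close> by (rule cSUP_upper2) simp
    also have "\<dots> \<le> ?s m / \<kappa>\<^sup>2"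
      using greedy[of m] \<open>0 < \<kappa>\<close> by (simp add: field_simps mult.commute)
    finally show ?thesis .
  qed
  have "(\<lambda>m. \<Sum>i\<in>I. (inner (r m i) w)\<^sup>2) \<longlonglongrightarrow> (\<Sum>i\<in>I. (inner (\<rho> i) w)\<^sup>2)"
    using lim by (intro tendsto_intros)
  moreover have "(\<lambda>m. ?s m / \<kappa>\<^sup>2) \<longlonglongrightarrow> 0"
    using tendsto_divide_zero[OF selected] by simp
  ultimately have "(\<Sum>i\<in>I. (inner (\<rho> i) w)\<^sup>2) \<le> 0"
    using bound by (blast intro: LIMSEQ_le)
  then have "(\<Sum>i\<in>I. (inner (\<rho> i) w)\<^sup>2) = 0" by (simp add: order_antisym sum_nonneg)
  then show ?thesis using \<open>finite I\<close> \<open>i \<in> I\<close> by (simp add: sum_nonneg_eq_0_iff)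
qed

lemma orthogonal_to_dense_span_eq_0:
  fixes x :: "'a::real_inner"
  assumes "closure (span D) = UNIV" and "\<And>w. w \<in> D \<Longrightarrow> inner x w = 0"
  shows "x = 0"
proof -
  have "span D \<subseteq> {y. inner x y = 0}"
    using orthogonal_to_span assms(2) by (fastforce simp: orthogonal_def)
  then have "closure (span D) \<subseteq> {y. inner x y = 0}"
    by (intro closure_minimal closed_Collect_eq continuous_intros)
  then have "inner x x = 0" using assms(1) by blast
  then show ?thesis by simp
qed

theorem mainTheorem10:
  fixes D :: "'a::{real_inner, complete_space} set"
    and \<phi> :: "nat \<Rightarrow> 'a"
    and n :: nat
    and \<kappa> :: real
    and \<omega> :: "nat \<Rightarrow> 'a"
    and W :: "nat \<Rightarrow> 'a set"
  assumes dict: "dictionary D"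
    and onb: "\<forall>i<n. \<forall>j<n. inner (\<phi> i) (\<phi> j) = (if i = j then 1 else 0)"
    and kappa: "0 < \<kappa>" "\<kappa> < 1"
    and W_def: "\<forall>k. W k = span (\<omega> ` {1..k})"
    and omp: "\<forall>k\<ge>1. \<omega> k \<in> D \<and>
        (\<Sum>i<n. (inner (\<phi> i - orth_proj (W (k - 1)) (\<phi> i)) (\<omega> k))\<^sup>2)
          \<ge> \<kappa>\<^sup>2 * (SUP w\<in>D. (\<Sum>i<n. (inner (\<phi> i - orth_proj (W (k - 1)) (\<phi> i)) w)\<^sup>2))"
  shows "(\<lambda>m. \<Sum>i<n. (norm (\<phi> i - orth_proj (W m) (\<phi> i)))\<^sup>2) \<longlonglongrightarrow> 0"
proof -
  define r where "r m i = \<phi> i - orth_proj (W m) (\<phi> i)" for m i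
  have "mono (\<lambda>k. \<omega> ` {1..k})" by (auto simp: mono_def)
  then have "\<exists>\<rho>. (\<lambda>m. r m i) \<longlonglongrightarrow> \<rho> \<and> (\<forall>k. \<forall>s\<in>W k. inner \<rho> s = 0)" for i
    using orth_proj_chain_residual_converges[of "\<lambda>k. \<omega> ` {1..k}" "\<phi> i"]
    unfolding r_def W_def[rule_format] by (metis finite_atLeastAtMost finite_imageI)
  then obtain \<rho> where lim: "\<And>i. (\<lambda>m. r m i) \<longlonglongrightarrow> \<rho> i"
    and orth: "\<And>i k s. s \<in> W k \<Longrightarrow> inner (\<rho> i) s = 0" by metis
  have \<omega>_in_W: "\<omega> (Suc m) \<in> W (Suc m)" for m
    unfolding W_def[rule_format] by (intro span_base) auto
  have norm_D: "\<And>w. w \<in> D \<Longrightarrow> norm w \<le> 1" using dict by (simp add: dictionary_def)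
  have greedy: "\<omega> (Suc m) \<in> D \<and> (\<Sum>i<n. (inner (r m i) (\<omega> (Suc m)))\<^sup>2)
      \<ge> \<kappa>\<^sup>2 * (SUP w\<in>D. \<Sum>i<n. (inner (r m i) w)\<^sup>2)" for m
    using omp[rule_format, of "Suc m"] unfolding r_def by simp
  have selected: "(\<lambda>m. \<Sum>i<n. (inner (r m i) (\<omega> (Suc m)))\<^sup>2) \<longlonglongrightarrow> 0"
    by (rule sum_inner_square_tendsto_0) (use lim orth[OF \<omega>_in_W] greedy norm_D in auto)
  have "\<rho> i = 0" if "i < n" for i
  proof (rule orthogonal_to_dense_span_eq_0)
    show "closure (span D) = UNIV" using dict by (simp add: dictionary_def)
    show "inner (\<rho> i) w = 0" if "w \<in> D" for w
      by (rule weak_greedy_limit_orthogonal[where I = "{..<n}"])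
        (use kappa(1) norm_D greedy selected lim \<open>w \<in> D\<close> \<open>i < n\<close> in auto)
  qed
  then have "(\<lambda>m. norm (r m i)) \<longlonglongrightarrow> 0" if "i < n" for i
    using lim[of i] that by (simp add: tendsto_norm_zero)
  then have "(\<lambda>m. \<Sum>i<n. (norm (r m i))\<^sup>2) \<longlonglongrightarrow> (\<Sum>i<n. 0\<^sup>2)"
    by (intro tendsto_intros) auto
  then show ?thesis unfolding r_def by simp
qed

end
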